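(* Let $\mathbf{A}\in\mathbb{R}^{m\times n}$ with $m<n$, let $\mathbf{x}^*=(x_1^*,\dots,x_n^* )^T\in\mathbb{R}^n$, let $\mathbf{y}=\mathbf{A}\mathbf{x}^*$, and let $\mathbf{T}\subseteq\{1,\dots,n\}$ be arbitrary (it may contain indices outside the support of $\mathbf{x}^*$). Let $\mathbf{N}=\{j: x_j^*\neq 0\}$, $\mathbf{T}^c=\{1,\dots,n\}\setminus\mathbf{T}$, $\boldsymbol{\Delta}=\mathbf{N}\setminus\mathbf{T}$, and let $\mathbf{F}$ be the family of all subsets of $\boldsymbol{\Delta}$ (including $\emptyset$ and $\boldsymbol{\Delta}$). Then $\mathbf{x}^*$ is the unique solution of $$\min_{\mathbf{x}\in\mathbb{R}^n}\ \|\mathbf{x}_{\mathbf{T}^c}\|_1\quad\text{s.t.}\quad \mathbf{y}=\mathbf{A}\mathbf{x}$$ if and only if for every $\mathbf{I}\in\mathbf{F}$ and every $\boldsymbol{\delta}=(\delta_1,\dots,\delta_n)^T\in\mathbb{R}^n$ satisfying $$\mathbf{A}\boldsymbol{\delta}=\mathbf{0},\quad \|\boldsymbol{\delta}\|_1=1,\quad \delta_k x_k^*>0\ \text{for } k\in\mathbf{I},\quad \delta_k x_k^*\le 0\ \text{for } k\in\boldsymbol{\Delta}\setminus\mathbf{I},$$ one has $$\sum_{k\in\mathbf{T}^c\setminus\mathbf{I}}|\delta_k|-\sum_{k\in\mathbf{I}}|\delta_k|>0.$$ (Equivalently: for each $\mathbf{I}\in\mathbf{F}$ for which this constraint set is nonempty,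 the objective $\sum_{k\in\mathbf{T}^c\setminus\mathbf{I}}|\delta_k|-\sum_{k\in\mathbf{I}}|\delta_k|$ is strictly positive on the whole constraint set.)
   Context: For $\mathbf{x}\in\mathbb{R}^n$ and an index set $\mathbf{S}\subseteq\{1,\dots,n\}$, $\mathbf{x}_{\mathbf{S}}$ denotes the vector of entries of $\mathbf{x}$ with indices in $\mathbf{S}$. The optimization problem $\min\|\mathbf{x}_{\mathbf{T}^c}\|_1$ s.t. $\mathbf{y}=\mathbf{A}\mathbf{x}$ is called modified-CS, and $\mathbf{T}$ is the "known part" of the support. *)

theory Defs
  imports "HOL-Analysis.Analysis"
begin

text \<open>Vectors in R^n are functions nat => real vanishing outside {..<n}
  (indices 0..n-1); an m x n matrix is a function nat => nat => real
  read on {..<m} x {..<n}.\<close>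

definition vec_on :: "nat \<Rightarrow> (nat \<Rightarrow> real) \<Rightarrow> bool" where
  "vec_on n x \<longleftrightarrow> (\<forall>j\<ge>n. x j = 0)"

definition matvec :: "nat \<Rightarrow> (nat \<Rightarrow> nat \<Rightarrow> real) \<Rightarrow> (nat \<Rightarrow> real) \<Rightarrow> nat \<Rightarrow> real" where
  "matvec n A x = (\<lambda>i. \<Sum>j<n. A i j * x j)"

definition l1_on :: "nat set \<Rightarrow> (nat \<Rightarrow> real) \<Rightarrow> real" where
  "l1_on S x = (\<Sum>k\<in>S. \<bar>x k\<bar>)"

definition modcs_unique_sol ::
  "nat \<Rightarrow> nat \<Rightarrow> (nat \<Rightarrow> nat \<Rightarrow> real) \<Rightarrow> (nat \<Rightarrow> real) \<Rightarrow> nat set \<Rightarrow> (nat \<Rightarrow> real) \<Rightarrow> bool" where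
  "modcs_unique_sol m n A y T x \<longleftrightarrow>
     vec_on n x \<and> (\<forall>i<m. matvec n A x i = y i) \<and>
     (\<forall>z. vec_on n z \<and> (\<forall>i<m. matvec n A z i = y i) \<and> z \<noteq> x \<longrightarrow>
        l1_on ({..<n} - T) x < l1_on ({..<n} - T) z)"

end

theory Submission
  imports Defs
begin

text \<open>
  Every feasible point is x* - t*d with d in the null space of A.  Fix the set
  I of indices in Delta = supp x* - T where d points in the same direction as
  x* (d_k x*_k > 0).  On T^c - I the entries of x* and t*d have opposite
  signs (or x*_k = 0), so |x*_k - t d_k| = |x*_k| + t|d_k|; on I the entries
  shrink, |x*_k - t d_k| = |x*_k| - t|d_k| as long as t is small, and are at
  least |x*_k| - t|d_k| in any case.  Summing over T^c gives
    ||(x* - t d)_{T^c}||_1  (= or >=)  ||x*_{T^c}||_1 + t * gap(I, d),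
  where gap(I, d) = ||d_{T^c - I}||_1 - ||d_I||_1.
  Necessity: a small step along a normalised null-space direction d with sign
  pattern I yields a competitor, so uniqueness forces gap(I, d) > 0.
  Sufficiency: for a competitor z, d = x* - z normalised has some sign pattern
  I, so the inequality with t = 1 shows that z has strictly larger objective.
\<close>

lemma abs_sub_opposite_sign:
  fixes x d t :: real
  assumes "d * x \<le> 0" and "t \<ge> 0"
  shows "\<bar>x - t * d\<bar> = \<bar>x\<bar> + t * \<bar>d\<bar>"
proof (cases "d \<ge> 0")
  case True
  then have "x \<le> 0 \<or> d = 0" using assms(1) by (auto simp: mult_le_0_iff)
  moreover have "t * d \<ge> 0" using True assms(2) by simp
  ultimately show ?thesis using True by auto
next
  case False
  then have "x \<ge> 0" using assms(1) by (auto simp: mult_le_0_iff)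
  moreover have "t * d \<le> 0" using False assms(2) by (simp add: mult_nonneg_nonpos)
  ultimately show ?thesis using False by auto
qed

lemma abs_sub_same_sign:
  fixes x d t :: real
  assumes "d * x > 0" and "t \<ge> 0" and "t * \<bar>d\<bar> \<le> \<bar>x\<bar>"
  shows "\<bar>x - t * d\<bar> = \<bar>x\<bar> - t * \<bar>d\<bar>"
  using assms by (cases "d > 0") (auto simp: zero_less_mult_iff)

lemma matvec_diff_scaled:
  "matvec n A (\<lambda>k. x k - t * d k) i = matvec n A x i - t * matvec n A d i"
  unfolding matvec_def by (simp add: sum_subtractf sum_distrib_left algebra_simps)

lemma matvec_divide:
  "matvec n A (\<lambda>k. d k / c) i = matvec n A d i / c"
  unfolding matvec_def by (simp add: sum_divide_distrib)

lemma l1_on_split: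
  assumes "B \<subseteq> S" and "finite S"
  shows "l1_on S x = l1_on (S - B) x + l1_on B x"
  unfolding l1_on_def using assms by (simp add: sum.subset_diff[of B S])

lemma l1_on_divide: "c > 0 \<Longrightarrow> l1_on S (\<lambda>k. d k / c) = l1_on S d / c"
  unfolding l1_on_def by (simp add: sum_divide_distrib)

lemma abs_le_l1_on: "k < n \<Longrightarrow> \<bar>d k\<bar> \<le> l1_on {..<n} d"
  unfolding l1_on_def by (intro member_le_sum) auto

lemma l1_on_pos:
  assumes "vec_on n d" and "d \<noteq> (\<lambda>_. 0)"
  shows "l1_on {..<n} d > 0"
proof -
  obtain k where k: "d k \<noteq> 0" using assms(2) by auto
  then have "k < n" using assms(1) unfolding vec_on_def by (meson not_le)
  then show ?thesis using abs_le_l1_on[of k n d] k by linarith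
qed

definition sign_pattern :: "nat set \<Rightarrow> nat set \<Rightarrow> (nat \<Rightarrow> real) \<Rightarrow> (nat \<Rightarrow> real) \<Rightarrow> bool" where
  "sign_pattern D I x d \<longleftrightarrow> (\<forall>k\<in>I. d k * x k > 0) \<and> (\<forall>k\<in>D - I. d k * x k \<le> 0)"

text \<open>First-order change of the objective on S when moving along -d with pattern I.\<close>
definition l1_gap :: "nat set \<Rightarrow> nat set \<Rightarrow> (nat \<Rightarrow> real) \<Rightarrow> real" where
  "l1_gap S I d = l1_on (S - I) d - l1_on I d"

text \<open>Outside the support of x every product d k * x k vanishes, so a sign pattern on
  the support within S controls all of S - I.\<close>
lemma sign_pattern_opposite_off_I:
  assumes "sign_pattern D I x d" and "\<forall>k\<in>S - D. x k = 0" and "k \<in> S - I"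
  shows "d k * x k \<le> 0"
  using assms unfolding sign_pattern_def by (cases "k \<in> D") auto

lemma sign_pattern_canonical:
  "sign_pattern D {k\<in>D. d k * x k > 0} x d"
  unfolding sign_pattern_def by auto

lemma sign_pattern_divide:
  assumes "sign_pattern D I x d" and "c > 0"
  shows "sign_pattern D I x (\<lambda>k. d k / c)"
  using assms unfolding sign_pattern_def
  by (auto simp: divide_pos_pos divide_nonpos_pos)

lemma l1_gap_divide: "c > 0 \<Longrightarrow> l1_gap S I (\<lambda>k. d k / c) = l1_gap S I d / c"
  unfolding l1_gap_def by (simp add: l1_on_divide diff_divide_distrib)

lemma l1_perturb_lower:
  assumes "finite S" and "I \<subseteq> S" and "t \<ge> 0"
    and opp: "\<forall>k\<in>S - I. d k * x k \<le> 0"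
  shows "l1_on S x + t * l1_gap S I d \<le> l1_on S (\<lambda>k. x k - t * d k)"
proof -
  have "l1_on S x + t * l1_gap S I d =
      (\<Sum>k\<in>S - I. \<bar>x k\<bar> + t * \<bar>d k\<bar>) + (\<Sum>k\<in>I. \<bar>x k\<bar> - t * \<bar>d k\<bar>)"
    using l1_on_split[OF assms(2,1), of x] unfolding l1_gap_def l1_on_def
    by (simp add: sum.distrib sum_subtractf sum_distrib_left algebra_simps)
  also have "\<dots> \<le> (\<Sum>k\<in>S - I. \<bar>x k - t * d k\<bar>) + (\<Sum>k\<in>I. \<bar>x k - t * d k\<bar>)"
  proof (intro add_mono sum_mono)
    show "\<bar>x k\<bar> + t * \<bar>d k\<bar> \<le> \<bar>x k - t * d k\<bar>" if "k \<in> S - I" for k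
      using abs_sub_opposite_sign[of "d k" "x k" t] opp that assms(3) by simp
    show "\<bar>x k\<bar> - t * \<bar>d k\<bar> \<le> \<bar>x k - t * d k\<bar>" for k
      using abs_triangle_ineq2[of "x k" "t * d k"] assms(3) by (simp add: abs_mult)
  qed
  also have "\<dots> = l1_on S (\<lambda>k. x k - t * d k)"
    using l1_on_split[OF assms(2,1), of "\<lambda>k. x k - t * d k"] unfolding l1_on_def by simp
  finally show ?thesis .
qed

lemma l1_perturb_exact:
  assumes "finite S" and "I \<subseteq> S" and "t \<ge> 0"
    and opp: "\<forall>k\<in>S - I. d k * x k \<le> 0"
    and same: "\<forall>k\<in>I. d k * x k > 0 \<and> t * \<bar>d k\<bar> \<le> \<bar>x k\<bar>"
  shows "l1_on S (\<lambda>k. x k - t * d k) = l1_on S x + t * l1_gap S I d"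
proof -
  have "l1_on S (\<lambda>k. x k - t * d k) =
      (\<Sum>k\<in>S - I. \<bar>x k - t * d k\<bar>) + (\<Sum>k\<in>I. \<bar>x k - t * d k\<bar>)"
    using l1_on_split[OF assms(2,1), of "\<lambda>k. x k - t * d k"] unfolding l1_on_def by simp
  also have "\<dots> = (\<Sum>k\<in>S - I. \<bar>x k\<bar> + t * \<bar>d k\<bar>) + (\<Sum>k\<in>I. \<bar>x k\<bar> - t * \<bar>d k\<bar>)"
  proof (intro arg_cong2[where f = "(+)"] sum.cong refl)
    show "\<bar>x k - t * d k\<bar> = \<bar>x k\<bar> + t * \<bar>d k\<bar>" if "k \<in> S - I" for k
      using abs_sub_opposite_sign[of "d k" "x k" t] opp that assms(3) by simp
    show "\<bar>x k - t * d k\<bar> = \<bar>x k\<bar> - t * \<bar>d k\<bar>" if "k \<in> I" for k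
      using abs_sub_same_sign[of "d k" "x k" t] same that assms(3) by simp
  qed
  also have "\<dots> = l1_on S x + t * l1_gap S I d"
    using l1_on_split[OF assms(2,1), of x] unfolding l1_gap_def l1_on_def
    by (simp add: sum.distrib sum_subtractf sum_distrib_left algebra_simps)
  finally show ?thesis .
qed

definition modcs_nsp :: "nat \<Rightarrow> nat \<Rightarrow> (nat \<Rightarrow> nat \<Rightarrow> real) \<Rightarrow> nat set \<Rightarrow> (nat \<Rightarrow> real) \<Rightarrow> bool" where
  "modcs_nsp m n A T x \<longleftrightarrow>
     (\<forall>I \<subseteq> {j\<in>{..<n}. x j \<noteq> 0} - T. \<forall>d.
        vec_on n d \<and> (\<forall>i<m. matvec n A d i = 0) \<and> l1_on {..<n} d = 1 \<and>
        sign_pattern ({j\<in>{..<n}. x j \<noteq> 0} - T) I x d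
        \<longrightarrow> l1_gap ({..<n} - T) I d > 0)"

text \<open>Necessity: a short step along such a direction is a competitor whose objective
  exceeds that of x by exactly t times the gap.\<close>
lemma modcs_unique_imp_nsp:
  assumes uniq: "modcs_unique_sol m n A (matvec n A x) T x"
  shows "modcs_nsp m n A T x"
  unfolding modcs_nsp_def
proof (intro allI impI, elim conjE)
  fix I d
  let ?D = "{j\<in>{..<n}. x j \<noteq> 0} - T" and ?S = "{..<n} - T"
  assume ID: "I \<subseteq> ?D" and vd: "vec_on n d" and kern: "\<forall>i<m. matvec n A d i = 0"
    and norm: "l1_on {..<n} d = 1" and pat: "sign_pattern ?D I x d"
  have IS: "I \<subseteq> ?S" using ID by blast
  have finI: "finite I" by (rule finite_subset[OF ID]) simp
  define t where "t = Min (insert 1 ((\<lambda>k. \<bar>x k\<bar>) ` I))"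
  have t_pos: "t > 0" unfolding t_def using finI ID by (subst Min_gr_iff) auto
  have small: "t * \<bar>d k\<bar> \<le> \<bar>x k\<bar>" if "k \<in> I" for k
  proof -
    have "\<bar>d k\<bar> \<le> 1" using abs_le_l1_on[of k n d] norm that ID by auto
    then have "t * \<bar>d k\<bar> \<le> t" using t_pos by (simp add: mult_left_le)
    also have "t \<le> \<bar>x k\<bar>" unfolding t_def using finI that by (intro Min_le) auto
    finally show ?thesis .
  qed
  have opp: "\<forall>k\<in>?S - I. d k * x k \<le> 0"
    using sign_pattern_opposite_off_I[OF pat, of ?S] by blast
  have same: "\<forall>k\<in>I. d k * x k > 0 \<and> t * \<bar>d k\<bar> \<le> \<bar>x k\<bar>"
    using pat small unfolding sign_pattern_def by blast
  have vx: "vec_on n x"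
    and better: "\<And>z. vec_on n z \<Longrightarrow> \<forall>i<m. matvec n A z i = matvec n A x i \<Longrightarrow> z \<noteq> x \<Longrightarrow>
        l1_on ?S x < l1_on ?S z"
    using uniq unfolding modcs_unique_sol_def by blast+
  define z where "z = (\<lambda>k. x k - t * d k)"
  have "d \<noteq> (\<lambda>_. 0)"
  proof
    assume "d = (\<lambda>_. 0)"
    then have "l1_on {..<n} d = 0" by (simp add: l1_on_def)
    with norm show False by simp
  qed
  then have z_ne: "z \<noteq> x" using t_pos unfolding z_def by (auto simp: fun_eq_iff)
  have "vec_on n z" using vd vx unfolding vec_on_def z_def by simp
  moreover have "\<forall>i<m. matvec n A z i = matvec n A x i"
    using kern unfolding z_def by (simp add: matvec_diff_scaled)
  ultimately have "l1_on ?S x < l1_on ?S z" using z_ne by (rule better)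
  also have "l1_on ?S z = l1_on ?S x + t * l1_gap ?S I d"
    unfolding z_def by (rule l1_perturb_exact[OF _ IS less_imp_le[OF t_pos] opp same]) simp
  finally show "l1_gap ?S I d > 0" using t_pos by (simp add: zero_less_mult_iff)
qed

text \<open>Sufficiency: a competitor z differs from x by a null-space direction; its
  normalisation has its canonical sign pattern, hence positive gap, and the
  perturbation estimate with t = 1 shows that z is strictly worse.\<close>
lemma modcs_nsp_imp_unique:
  assumes nsp: "modcs_nsp m n A T x" and vx: "vec_on n x"
  shows "modcs_unique_sol m n A (matvec n A x) T x"
  unfolding modcs_unique_sol_def
proof (intro conjI allI impI)
  let ?D = "{j\<in>{..<n}. x j \<noteq> 0} - T" and ?S = "{..<n} - T"
  show "vec_on n x" by (rule vx)
  show "matvec n A x i = matvec n A x i" for i ..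
  fix z assume "vec_on n z \<and> (\<forall>i<m. matvec n A z i = matvec n A x i) \<and> z \<noteq> x"
  then have vz: "vec_on n z" and feas: "\<forall>i<m. matvec n A z i = matvec n A x i"
    and "z \<noteq> x" by auto
  define d where "d = (\<lambda>k. x k - z k)"
  define c where "c = l1_on {..<n} d"
  define I where "I = {k\<in>?D. d k * x k > 0}"
  have vd: "vec_on n d" using vx vz unfolding vec_on_def d_def by auto
  have kern: "\<forall>i<m. matvec n A d i = 0"
    using feas matvec_diff_scaled[of n A x 1 z] unfolding d_def by simp
  have "d \<noteq> (\<lambda>_. 0)"
  proof
    assume "d = (\<lambda>_. 0)"
    then have "z = x" unfolding d_def by (simp add: fun_eq_iff)
    with \<open>z \<noteq> x\<close> show False by contradiction
  qed
  then have c_pos: "c > 0" unfolding c_def using vd by (rule l1_on_pos[rotated])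
  have pat: "sign_pattern ?D I x d" unfolding I_def by (rule sign_pattern_canonical)
  have "l1_gap ?S I (\<lambda>k. d k / c) > 0"
  proof (rule nsp[unfolded modcs_nsp_def, rule_format])
    show "I \<subseteq> ?D" unfolding I_def by auto
    show "vec_on n (\<lambda>k. d k / c) \<and> (\<forall>i<m. matvec n A (\<lambda>k. d k / c) i = 0) \<and>
        l1_on {..<n} (\<lambda>k. d k / c) = 1 \<and> sign_pattern ?D I x (\<lambda>k. d k / c)"
      using vd kern c_pos sign_pattern_divide[OF pat c_pos]
      by (simp add: vec_on_def matvec_divide l1_on_divide c_def)
  qed
  then have gap: "l1_gap ?S I d > 0" using c_pos by (simp add: l1_gap_divide zero_less_divide_iff)
  have "I \<subseteq> ?S" unfolding I_def by auto
  moreover have "\<forall>k\<in>?S - I. d k * x k \<le> 0"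
    using sign_pattern_opposite_off_I[OF pat, of ?S] by blast
  ultimately have "l1_on ?S x + 1 * l1_gap ?S I d \<le> l1_on ?S (\<lambda>k. x k - 1 * d k)"
    by (intro l1_perturb_lower) auto
  also have "(\<lambda>k. x k - 1 * d k) = z" unfolding d_def by simp
  finally show "l1_on ?S x < l1_on ?S z" using gap by simp
qed

text \<open>The theorem is the null space condition written out.\<close>

theorem theorem1:
  fixes m n :: nat and A :: "nat \<Rightarrow> nat \<Rightarrow> real" and xs :: "nat \<Rightarrow> real"
    and T :: "nat set"
  assumes "m < n"
    and "vec_on n xs"
    and "T \<subseteq> {..<n}"
  shows "modcs_unique_sol m n A (matvec n A xs) T xs \<longleftrightarrow>
    (\<forall>I \<subseteq> {j\<in>{..<n}. xs j \<noteq> 0} - T. \<forall>\<delta>.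
       vec_on n \<delta> \<and> (\<forall>i<m. matvec n A \<delta> i = 0) \<and> l1_on {..<n} \<delta> = 1 \<and>
       (\<forall>k\<in>I. \<delta> k * xs k > 0) \<and>
       (\<forall>k\<in>({j\<in>{..<n}. xs j \<noteq> 0} - T) - I. \<delta> k * xs k \<le> 0)
       \<longrightarrow> l1_on (({..<n} - T) - I) \<delta> - l1_on I \<delta> > 0)"
proof -
  have "modcs_unique_sol m n A (matvec n A xs) T xs \<longleftrightarrow> modcs_nsp m n A T xs"
    using modcs_unique_imp_nsp modcs_nsp_imp_unique[OF _ assms(2)] by blast
  then show ?thesis unfolding modcs_nsp_def sign_pattern_def l1_gap_def by simp
qed

end
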